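(* For every hypothesis class $\mathcal{F}\subseteq\mathcal{Y}^{\mathcal{X}}$ (with $\mathcal{Y}$ finite), $\mathrm{DFFdim}(\mathrm{OtD}(\mathcal{F}))\geq\mathrm{Ldim}(\mathcal{F})$.
   Context: Setting. A teacher over $\mathcal{X},\mathcal{Y},\Phi$ ($\Phi$ a set of Boolean features on $\mathcal{X}$, $\bot$ a null symbol) is a pair $T=(\ell,\psi)$ with $\ell:\mathcal{X}\to\mathcal{Y}$ and $\psi:\mathcal{X}\times\mathcal{X}\to\Phi\cup\{\bot\}$ such that whenever $\ell(x)\neq\ell(\hat x)$, $\phi:=\psi(x,\hat x)\in\Phi$, $\phi(x)=1$ and $\phi(\hat x)=0$. A teacher class is a set of teachers. A history is a non-empty set $H\subseteq\mathcal{X}\times\mathcal{Y}$, $H_{\mathcal{X}}=\{x:\exists y,(x,y)\in H\}$; a teacher $(\ell,\psi)$ is consistent with $H$ if $\ell(x)=y$ for all $(x,y)\in H$; $\mathcal{T}_H$ is the set of teachers in $\mathcal{T}$ consistent with $H$. DFF dimension. A DFF tree is a rooted tree whose nodes are triples $\langle y,\phi,x\rangle$ with $y\in\mathcal{Y}\cup\{\bot\}$, $\phi\in\Phi\cup\{\bot\}$, $x\in\mathcal{X}\cup\{\bot\}$, such that the root has $y=\phi=\bot$, a node has $x=\bot$ iff it is a leaf, every edge is labeled by a pair $(\hat x,\hat y)\in\mathcal{X}\times\mathcal{Y}$, and every non-root node $\langle y,\phi,x\rangle$ with incoming edge $(\hat x,\hat y)$ has $\phi\neq\bot$ whenever $y\neq\hat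 y$. For a parent–child pair $\langle\cdot,\cdot,x\rangle\xrightarrow{(\hat x,\hat y)}\langle y,\phi,\cdot\rangle$ on a path, $(x,y)$ is called a labeled example in that path. A path from the root is consistent with a teacher $(\ell,\psi)$ if for every such parent–child pair on it, $\ell(x)=y$ and, if $y\neq\hat y$, $\psi(x,\hat x)=\phi$. Given $\mathcal{T}$ consistent with $H$, a DFF tree is shattered by $\mathcal{T}$ and $H$ if: (1) every non-root node $\langle y,\phi,x\rangle$ with incoming edge $(\hat x,\hat y)$ has $y\neq\hat y$; (2) the labels of the outgoing edges of each non-leaf node $v$ are exactly the pairs that belong to $H$ or are labeled examples in the path from the root to $v$; (3) every root-to-leaf path is consistent with some teacher in $\mathcal{T}_H$; (4) all root-to-leaf paths have the same number of edges, called the height. $\mathrm{DFFdim}(\mathcal{T},H)$ is the maximal height of a DFF tree shattered by $\mathcal{T}$ and $H$. $\mathrm{Ldim}$ is the (multiclass) Littlestone dimension: the maximal depth of a complete binary tree whose internal nodes are labeled by examples and whose two outgoing edges at each internal node are labeled by two distinct labels, such that for every root-to-leaf path some $f\in\mathcal{F}$ agrees with all (example, edge label) pairs on the path. Mapping OtD: given $\mathcal{F}\subseteq\mathcal{Y}^{\mathcal{X}}$, for each $y\in\mathcal{Y}$ let $\star_y\notin\mathcal{X}$ be a new distinct point, $H=\{(\star_y,y):y\in\mathcal{Y}\}$, $\mathcal{X}'=\mathcal{X}\cup H_{\mathcal{X}}$, and $\Phi=\{\mathbb{I}[x]:x\in\mathcal{X}'\}$ where $\mathbb{I}[x](x')=1$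 iff $x'=x$. For $f\in\mathcal{F}$ let $f':\mathcal{X}'\to\mathcal{Y}$ extend $f$ by $f'(\star_y)=y$, let $\psi_f(x,x')=\mathbb{I}[x]$, and $T_f=(f',\psi_f)$. Then $\mathrm{OtD}(\mathcal{F})=(\mathcal{T}_{\mathcal{F}},H)$ with $\mathcal{T}_{\mathcal{F}}=\{T_f:f\in\mathcal{F}\}$ (a teacher class over $\mathcal{X}',\mathcal{Y},\Phi$). *)

theory Defs
  imports Main "HOL-Library.Extended_Nat"
begin

(* Boolean features on a domain 'a are predicates 'a \<Rightarrow> bool; the null symbol \<bottom>
   is rendered as None. A teacher is a pair (l, psi). *)
type_synonym ('a,'b) teacher = "('a \<Rightarrow> 'b) \<times> ('a \<Rightarrow> 'a \<Rightarrow> ('a \<Rightarrow> bool) option)"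

definition is_teacher :: "('a \<Rightarrow> bool) set \<Rightarrow> ('a,'b) teacher \<Rightarrow> bool" where
  "is_teacher Phi T \<longleftrightarrow>
     (\<forall>x. \<forall>x'. \<forall>\<phi>. snd T x x' = Some \<phi> \<longrightarrow> \<phi> \<in> Phi) \<and>
     (\<forall>x x'. fst T x \<noteq> fst T x' \<longrightarrow>
        (\<exists>\<phi>. snd T x x' = Some \<phi> \<and> \<phi> \<in> Phi \<and> \<phi> x \<and> \<not> \<phi> x'))"

definition consistent_hist :: "('a,'b) teacher \<Rightarrow> ('a \<times> 'b) set \<Rightarrow> bool" where
  "consistent_hist T H \<longleftrightarrow> (\<forall>(x,y)\<in>H. fst T x = y)"

definition teachers_consistent :: "('a,'b) teacher set \<Rightarrow> ('a \<times> 'b) set \<Rightarrow> ('a,'b) teacher set" where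
  "teachers_consistent TT H = {T \<in> TT. consistent_hist T H}"

(* A node <y, phi, x>; outgoing edges are given by a partial map from edge labels
   (x_hat, y_hat) to children (so each edge label occurs at most once). *)
datatype ('a,'b) dtree =
  DNode (dlab: "'b option") (dfeat: "('a \<Rightarrow> bool) option") (dpt: "'a option")
        (dch: "'a \<times> 'b \<Rightarrow> ('a,'b) dtree option")

fun subtree :: "('a,'b) dtree \<Rightarrow> ('a \<times> 'b) list \<Rightarrow> ('a,'b) dtree option" where
  "subtree t [] = Some t"
| "subtree t (e # es) = (case dch t e of None \<Rightarrow> None | Some c \<Rightarrow> subtree c es)"

definition is_node :: "('a,'b) dtree \<Rightarrow> ('a \<times> 'b) list \<Rightarrow> bool" where
  "is_node t p \<longleftrightarrow> subtree t p \<noteq> None"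

definition nd :: "('a,'b) dtree \<Rightarrow> ('a \<times> 'b) list \<Rightarrow> ('a,'b) dtree" where
  "nd t p = the (subtree t p)"

definition is_leaf :: "('a,'b) dtree \<Rightarrow> bool" where
  "is_leaf v \<longleftrightarrow> (\<forall>e. dch v e = None)"

definition out_labels :: "('a,'b) dtree \<Rightarrow> ('a \<times> 'b) set" where
  "out_labels v = {e. dch v e \<noteq> None}"

definition dff_tree :: "('a \<Rightarrow> bool) set \<Rightarrow> ('a,'b) dtree \<Rightarrow> bool" where
  "dff_tree Phi t \<longleftrightarrow>
     dlab t = None \<and> dfeat t = None \<and>
     (\<forall>p. is_node t p \<longrightarrow> (dpt (nd t p) = None \<longleftrightarrow> is_leaf (nd t p))) \<and>
     (\<forall>p. is_node t p \<longrightarrow> (\<forall>\<phi>. dfeat (nd t p) = Some \<phi> \<longrightarrow> \<phi> \<in> Phi)) \<and>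
     (\<forall>p e. is_node t (p @ [e]) \<longrightarrow>
        dlab (nd t (p @ [e])) \<noteq> Some (snd e) \<longrightarrow> dfeat (nd t (p @ [e])) \<noteq> None)"

(* labeled examples (x,y) in the root path p: x from the parent, y from the child *)
definition path_examples :: "('a,'b) dtree \<Rightarrow> ('a \<times> 'b) list \<Rightarrow> ('a \<times> 'b) set" where
  "path_examples t p =
     {(x,y) | i x y. i < length p \<and> dpt (nd t (take i p)) = Some x \<and>
                     dlab (nd t (take (Suc i) p)) = Some y}"

definition path_consistent :: "('a,'b) dtree \<Rightarrow> ('a \<times> 'b) list \<Rightarrow> ('a,'b) teacher \<Rightarrow> bool" where
  "path_consistent t p T \<longleftrightarrow>
     (\<forall>i < length p. \<forall>x. dpt (nd t (take i p)) = Some x \<longrightarrow>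
        (dlab (nd t (take (Suc i) p)) = Some (fst T x) \<and>
         (fst T x \<noteq> snd (p ! i) \<longrightarrow> snd T x (fst (p ! i)) = dfeat (nd t (take (Suc i) p)))))"

definition dff_shattered :: "('a \<Rightarrow> bool) set \<Rightarrow> ('a,'b) teacher set \<Rightarrow> ('a \<times> 'b) set
                              \<Rightarrow> ('a,'b) dtree \<Rightarrow> nat \<Rightarrow> bool" where
  "dff_shattered Phi TT H t d \<longleftrightarrow>
     dff_tree Phi t \<and>
     (\<forall>p e. is_node t (p @ [e]) \<longrightarrow> dlab (nd t (p @ [e])) \<noteq> Some (snd e)) \<and>
     (\<forall>p. is_node t p \<and> \<not> is_leaf (nd t p) \<longrightarrow> out_labels (nd t p) = H \<union> path_examples t p) \<and>
     (\<forall>p. is_node t p \<and> is_leaf (nd t p) \<longrightarrow>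
        (\<exists>T \<in> teachers_consistent TT H. path_consistent t p T)) \<and>
     (\<forall>p. is_node t p \<and> is_leaf (nd t p) \<longrightarrow> length p = d)"

definition DFFdim :: "('a \<Rightarrow> bool) set \<Rightarrow> ('a,'b) teacher set \<Rightarrow> ('a \<times> 'b) set \<Rightarrow> enat" where
  "DFFdim Phi TT H = Sup {enat d | d. \<exists>t. dff_shattered Phi TT H t d}"

datatype ('x,'y) ltree = LLeaf | LInner 'x 'y "('x,'y) ltree" 'y "('x,'y) ltree"

fun lcomplete :: "('x,'y) ltree \<Rightarrow> nat \<Rightarrow> bool" where
  "lcomplete LLeaf d = (d = 0)"
| "lcomplete (LInner x a l b r) d =
     (case d of 0 \<Rightarrow> False | Suc n \<Rightarrow> a \<noteq> b \<and> lcomplete l n \<and> lcomplete r n)"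

fun lpaths :: "('x,'y) ltree \<Rightarrow> ('x \<times> 'y) list set" where
  "lpaths LLeaf = {[]}"
| "lpaths (LInner x a l b r) = (\<lambda>q. (x,a) # q) ` lpaths l \<union> (\<lambda>q. (x,b) # q) ` lpaths r"

definition Ldim :: "('x \<Rightarrow> 'y) set \<Rightarrow> enat" where
  "Ldim F = Sup {enat d | d. \<exists>t. lcomplete t d \<and>
                   (\<forall>q \<in> lpaths t. \<exists>f \<in> F. \<forall>(x,y) \<in> set q. f x = y)}"

datatype ('x,'y) ext = Orig 'x | Star 'y

definition ind :: "'a \<Rightarrow> 'a \<Rightarrow> bool" where
  "ind x = (\<lambda>x'. x' = x)"

fun ext_fun :: "('x \<Rightarrow> 'y) \<Rightarrow> ('x,'y) ext \<Rightarrow> 'y" where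
  "ext_fun f (Orig x) = f x"
| "ext_fun f (Star y) = y"

definition teacher_of :: "('x \<Rightarrow> 'y) \<Rightarrow> (('x,'y) ext, 'y) teacher" where
  "teacher_of f = (ext_fun f, \<lambda>x x'. Some (ind x))"

definition OtD_hist :: "(('x,'y) ext \<times> 'y) set" where
  "OtD_hist = {(Star y, y) | y. True}"

definition OtD_Phi :: "(('x,'y) ext \<Rightarrow> bool) set" where
  "OtD_Phi = {ind x | x. True}"

(* OtD(F) = (T_F, H), a teacher class over X' = ('x,'y) ext, Y = 'y, Phi = OtD_Phi *)
definition OtD :: "('x \<Rightarrow> 'y) set \<Rightarrow> ((('x,'y) ext, 'y) teacher set \<times> (('x,'y) ext \<times> 'y) set)" where
  "OtD F = (teacher_of ` F, OtD_hist)"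

end

theory Submission
  imports Defs
begin

text \<open>A complete Littlestone tree of depth \<open>d\<close> is unfolded into a DFF tree of height \<open>d\<close>.
  An inner node querying \<open>x\<close> with branch labels \<open>a \<noteq> b\<close> becomes a node with point
  \<open>Orig x\<close>; whatever label \<open>y\<close> an outgoing edge carries, the teacher answers with a branch
  label different from \<open>y\<close> (\<open>a\<close>, or \<open>b\<close> if \<open>y = a\<close>), which the singleton feature
  \<open>ind (Orig x)\<close> justifies, and descends into that branch.  So every root-to-leaf path of the
  DFF tree follows a root-to-leaf path of the Littlestone tree, and a hypothesis realising
  that path is a teacher consistent with it.\<close>

lemma nd_Nil [simp]: "nd t [] = t"
  by (simp add: nd_def)

lemma is_node_Cons: "is_node t (e # es) \<longleftrightarrow> (\<exists>c. dch t e = Some c \<and> is_node c es)"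
  by (auto simp: is_node_def split: option.splits)

lemma nd_Cons: "dch t e = Some c \<Longrightarrow> nd t (e # es) = nd c es"
  by (simp add: nd_def)

lemma path_examples_eq:
  "path_examples t p =
    (\<Union>i<length p. {(x, y). dpt (nd t (take i p)) = Some x \<and> dlab (nd t (take (Suc i) p)) = Some y})"
  unfolding path_examples_def by blast

lemma path_examples_Cons:
  assumes "dch t e = Some c"
  shows "path_examples t (e # es) =
    {(x, y). dpt t = Some x \<and> dlab c = Some y} \<union> path_examples c es"
  using assms unfolding path_examples_eq
  by (simp add: lessThan_Suc_eq_insert_0 nd_Cons)

lemma path_consistent_Cons:
  assumes "dch t e = Some c"
  shows "path_consistent t (e # es) T \<longleftrightarrow>
    (\<forall>x. dpt t = Some x \<longrightarrow> dlab c = Some (fst T x) \<and>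
       (fst T x \<noteq> snd e \<longrightarrow> snd T x (fst e) = dfeat c)) \<and> path_consistent c es T"
  using assms unfolding path_consistent_def
  by (simp add: All_less_Suc2 nd_Cons)

text \<open>\<open>lab\<close> and \<open>\<phi>\<close> are the label and feature of the node itself, \<open>S\<close> the examples revealed
  on the path to it.\<close>

primrec dff_of_ltree :: "('x, 'y) ltree \<Rightarrow> 'y option \<Rightarrow> (('x, 'y) ext \<Rightarrow> bool) option
    \<Rightarrow> (('x, 'y) ext \<times> 'y) set \<Rightarrow> (('x, 'y) ext, 'y) dtree" where
  "dff_of_ltree LLeaf lab \<phi> S = DNode lab \<phi> None (\<lambda>_. None)"
| "dff_of_ltree (LInner x a l b r) lab \<phi> S = DNode lab \<phi> (Some (Orig x))
     (\<lambda>e. if e \<in> OtD_hist \<union> S then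
            Some (if snd e \<noteq> a
                  then dff_of_ltree l (Some a) (Some (ind (Orig x))) (insert (Orig x, a) S)
                  else dff_of_ltree r (Some b) (Some (ind (Orig x))) (insert (Orig x, b) S))
          else None)"

declare dff_of_ltree.simps [simp del]

lemma dlab_dff_of_ltree [simp]: "dlab (dff_of_ltree lt lab \<phi> S) = lab"
  and dfeat_dff_of_ltree [simp]: "dfeat (dff_of_ltree lt lab \<phi> S) = \<phi>"
  by (cases lt; simp add: dff_of_ltree.simps)+

lemma dpt_dff_of_LInner [simp]: "dpt (dff_of_ltree (LInner x a l b r) lab \<phi> S) = Some (Orig x)"
  by (simp add: dff_of_ltree.simps)

lemma dch_dff_of_LLeaf [simp]: "dch (dff_of_ltree LLeaf lab \<phi> S) e = None"
  by (simp add: dff_of_ltree.simps)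

lemma Star_in_OtD_hist: "(Star y, y) \<in> OtD_hist"
  by (auto simp: OtD_hist_def)

lemma is_leaf_dff_of_ltree: "is_leaf (dff_of_ltree lt lab \<phi> S) \<longleftrightarrow> lt = LLeaf"
  and dpt_dff_of_ltree_eq_None: "dpt (dff_of_ltree lt lab \<phi> S) = None \<longleftrightarrow> lt = LLeaf"
  by (cases lt; auto simp: dff_of_ltree.simps is_leaf_def intro: Star_in_OtD_hist)+

lemma out_labels_dff_of_ltree:
  "lt \<noteq> LLeaf \<Longrightarrow> out_labels (dff_of_ltree lt lab \<phi> S) = OtD_hist \<union> S"
  by (cases lt) (auto simp: dff_of_ltree.simps out_labels_def)

lemma dch_dff_of_LInner:
  assumes "dch (dff_of_ltree (LInner x a l b r) lab \<phi> S) e = Some c" and "a \<noteq> b"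
  obtains y' s where "(y', s) \<in> {(a, l), (b, r)}" and "y' \<noteq> snd e"
    and "c = dff_of_ltree s (Some y') (Some (ind (Orig x))) (insert (Orig x, y') S)"
  using assms by (auto simp: dff_of_ltree.simps split: if_splits)

lemma lcomplete_LInner_elim:
  assumes "lcomplete (LInner x a l b r) d"
  obtains n where "d = Suc n" and "a \<noteq> b" and "lcomplete l n" and "lcomplete r n"
  using assms by (cases d) auto

lemma nd_dff_of_ltree:
  assumes "is_node (dff_of_ltree lt lab \<phi> S) p" and "lcomplete lt d"
  shows "\<exists>lt' y' \<phi>'. nd (dff_of_ltree lt lab \<phi> S) p
      = dff_of_ltree lt' y' \<phi>' (S \<union> path_examples (dff_of_ltree lt lab \<phi> S) p)
    \<and> lcomplete lt' (d - length p) \<and> length p \<le> d"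
  using assms
proof (induction lt arbitrary: lab \<phi> S p d)
  case LLeaf
  then show ?case
    by (cases p) (auto simp: is_node_Cons path_examples_def intro!: exI[of _ LLeaf])
next
  case (LInner x a l b r)
  show ?case
  proof (cases p)
    case Nil
    with LInner.prems show ?thesis
      by (auto simp: path_examples_def intro!: exI[of _ "LInner x a l b r"])
  next
    case (Cons e es)
    obtain n where n: "d = Suc n" "a \<noteq> b" "lcomplete l n" "lcomplete r n"
      using LInner.prems(2) by (rule lcomplete_LInner_elim)
    obtain c where c: "dch (dff_of_ltree (LInner x a l b r) lab \<phi> S) e = Some c" "is_node c es"
      using LInner.prems(1) Cons by (auto simp: is_node_Cons)
    obtain y' s where ys: "(y', s) \<in> {(a, l), (b, r)}"
      and c_eq: "c = dff_of_ltree s (Some y') (Some (ind (Orig x))) (insert (Orig x, y') S)"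
      using c(1) n(2) by (rule dch_dff_of_LInner)
    have "\<exists>lt' y'' \<phi>'. nd c es = dff_of_ltree lt' y'' \<phi>' (insert (Orig x, y') S \<union> path_examples c es)
        \<and> lcomplete lt' (n - length es) \<and> length es \<le> n"
      using ys LInner.IH c(2) n(3,4) unfolding c_eq by blast
    moreover have "path_examples (dff_of_ltree (LInner x a l b r) lab \<phi> S) p
        = insert (Orig x, y') (path_examples c es)"
      using path_examples_Cons[OF c(1)] Cons c_eq by auto
    ultimately show ?thesis using Cons c(1) n(1) by (auto simp: nd_Cons)
  qed
qed

lemma dff_of_ltree_last_edge:
  assumes "is_node (dff_of_ltree lt lab \<phi> S) (p @ [e])" and "lcomplete lt d"
  shows "dlab (nd (dff_of_ltree lt lab \<phi> S) (p @ [e])) \<noteq> Some (snd e)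
    \<and> dfeat (nd (dff_of_ltree lt lab \<phi> S) (p @ [e])) \<in> Some ` OtD_Phi"
  using assms
proof (induction lt arbitrary: lab \<phi> S p d)
  case LLeaf
  then show ?case by (cases p) (auto simp: is_node_Cons)
next
  case (LInner x a l b r)
  obtain n where n: "a \<noteq> b" "lcomplete l n" "lcomplete r n"
    using LInner.prems(2) by (rule lcomplete_LInner_elim)
  obtain e' es where p_e: "p @ [e] = e' # es"
    by (cases "p @ [e]") auto
  obtain c where c: "dch (dff_of_ltree (LInner x a l b r) lab \<phi> S) e' = Some c" "is_node c es"
    using LInner.prems(1) p_e by (auto simp: is_node_Cons)
  obtain y' s where ys: "(y', s) \<in> {(a, l), (b, r)}" and "y' \<noteq> snd e'"
    and c_eq: "c = dff_of_ltree s (Some y') (Some (ind (Orig x))) (insert (Orig x, y') S)"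
    using c(1) n(1) by (rule dch_dff_of_LInner)
  show ?case
  proof (cases p)
    case Nil
    with p_e c_eq \<open>y' \<noteq> snd e'\<close> show ?thesis by (auto simp: nd_Cons[OF c(1)] OtD_Phi_def)
  next
    case (Cons e'' p')
    with p_e have "es = p' @ [e]" by simp
    with ys LInner.IH c(2) n(2,3) show ?thesis
      unfolding p_e nd_Cons[OF c(1)] c_eq by blast
  qed
qed

lemma dff_of_ltree_leaf_consistent:
  assumes "is_node (dff_of_ltree lt lab \<phi> S) p" and "is_leaf (nd (dff_of_ltree lt lab \<phi> S) p)"
    and "lcomplete lt d"
  shows "\<exists>q \<in> lpaths lt. \<forall>f. (\<forall>(x, y) \<in> set q. f x = y)
    \<longrightarrow> path_consistent (dff_of_ltree lt lab \<phi> S) p (teacher_of f)"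
  using assms
proof (induction lt arbitrary: lab \<phi> S p d)
  case LLeaf
  then show ?case by (cases p) (auto simp: is_node_Cons path_consistent_def)
next
  case (LInner x a l b r)
  obtain n where n: "a \<noteq> b" "lcomplete l n" "lcomplete r n"
    using LInner.prems(3) by (rule lcomplete_LInner_elim)
  obtain e es where p: "p = e # es"
    using LInner.prems(2) by (cases p) (auto simp: is_leaf_dff_of_ltree)
  obtain c where c: "dch (dff_of_ltree (LInner x a l b r) lab \<phi> S) e = Some c" "is_node c es"
    using LInner.prems(1) p by (auto simp: is_node_Cons)
  obtain y' s where ys: "(y', s) \<in> {(a, l), (b, r)}"
    and c_eq: "c = dff_of_ltree s (Some y') (Some (ind (Orig x))) (insert (Orig x, y') S)"
    using c(1) n(1) by (rule dch_dff_of_LInner)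
  obtain q where q: "q \<in> lpaths s"
    "\<forall>f. (\<forall>(x, y) \<in> set q. f x = y) \<longrightarrow> path_consistent c es (teacher_of f)"
    using ys LInner.IH c(2) LInner.prems(2) n(2,3) unfolding p nd_Cons[OF c(1)] c_eq by blast
  have "(x, y') # q \<in> lpaths (LInner x a l b r)"
    using ys q(1) by auto
  moreover have "path_consistent (dff_of_ltree (LInner x a l b r) lab \<phi> S) p (teacher_of f)"
    if "\<forall>(x', y) \<in> set ((x, y') # q). f x' = y" for f
    using that q(2) unfolding p path_consistent_Cons[OF c(1)] c_eq
    by (simp add: teacher_of_def)
  ultimately show ?case by blast
qed

lemma consistent_hist_teacher_of: "consistent_hist (teacher_of f) OtD_hist"
  by (auto simp: consistent_hist_def OtD_hist_def teacher_of_def)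

lemma dff_of_ltree_shattered:
  assumes lc: "lcomplete lt d" and sh: "\<forall>q \<in> lpaths lt. \<exists>f \<in> F. \<forall>(x, y) \<in> set q. f x = y"
  shows "dff_shattered OtD_Phi (teacher_of ` F) OtD_hist (dff_of_ltree lt None None {}) d"
proof -
  let ?t = "dff_of_ltree lt None None {}"
  have node: "\<exists>lt' lab \<phi>. nd ?t p = dff_of_ltree lt' lab \<phi> (path_examples ?t p)
      \<and> lcomplete lt' (d - length p) \<and> length p \<le> d" if "is_node ?t p" for p
    using nd_dff_of_ltree[OF that lc] by simp
  have leaf: "dpt (nd ?t p) = None \<longleftrightarrow> is_leaf (nd ?t p)" if "is_node ?t p" for p
    using node[OF that] by (auto simp: is_leaf_dff_of_ltree dpt_dff_of_ltree_eq_None)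
  have feature: "\<phi> \<in> OtD_Phi" if "is_node ?t p" "dfeat (nd ?t p) = Some \<phi>" for p \<phi>
  proof (cases p rule: rev_cases)
    case Nil
    with that show ?thesis by simp
  next
    case (snoc p' e)
    with dff_of_ltree_last_edge[OF _ lc] that show ?thesis by fastforce
  qed
  have edge: "dlab (nd ?t (p @ [e])) \<noteq> Some (snd e) \<and> dfeat (nd ?t (p @ [e])) \<noteq> None"
    if "is_node ?t (p @ [e])" for p e
    using dff_of_ltree_last_edge[OF that lc] by auto
  have out: "out_labels (nd ?t p) = OtD_hist \<union> path_examples ?t p"
    if "is_node ?t p" "\<not> is_leaf (nd ?t p)" for p
    using node[OF that(1)] that(2) by (auto simp: is_leaf_dff_of_ltree out_labels_dff_of_ltree)
  have consistent: "\<exists>T \<in> teachers_consistent (teacher_of ` F) OtD_hist. path_consistent ?t p T"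
    if p_leaf: "is_node ?t p" "is_leaf (nd ?t p)" for p
  proof -
    obtain q where "q \<in> lpaths lt"
      and q: "\<forall>f. (\<forall>(x, y) \<in> set q. f x = y) \<longrightarrow> path_consistent ?t p (teacher_of f)"
      using dff_of_ltree_leaf_consistent[OF p_leaf lc] by blast
    with sh obtain f where "f \<in> F" "\<forall>(x, y) \<in> set q. f x = y"
      by blast
    with q show ?thesis
      by (auto simp: teachers_consistent_def consistent_hist_teacher_of)
  qed
  have depth: "length p = d" if "is_node ?t p" "is_leaf (nd ?t p)" for p
    using node[OF that(1)] that(2) by (auto simp: is_leaf_dff_of_ltree)
  show ?thesis
    unfolding dff_shattered_def dff_tree_def
    using leaf feature edge out consistent depth by simp
qed

theorem mainTheorem9:
  fixes F :: "('x \<Rightarrow> 'y::finite) set"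
  shows "Ldim F \<le> DFFdim OtD_Phi (fst (OtD F)) (snd (OtD F))"
proof -
  have "{enat d | d. \<exists>t. lcomplete t d \<and> (\<forall>q \<in> lpaths t. \<exists>f \<in> F. \<forall>(x, y) \<in> set q. f x = y)}
     \<subseteq> {enat d | d. \<exists>t. dff_shattered OtD_Phi (teacher_of ` F) OtD_hist t d}"
    using dff_of_ltree_shattered by blast
  then show ?thesis
    unfolding Ldim_def DFFdim_def OtD_def by (simp add: Sup_subset_mono)
qed

end
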